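(* Let $z$ be an indeterminate and $\widehat B_z(x)=\sum_{n\ge0}\left(\frac1z\int_0^z\beta_n(y)\,dy\right)x^n$. As formal power series in $x$, $$\widehat B_z(x)=\cfrac{1}{[1]_q+\cfrac{([1]_q-z)x}{\frac{q+1}{[1]_q}-\cfrac{([1]_q+qz)x}{[3]_q+\cfrac{q([2]_q-z)x}{\frac{q^2+1}{[2]_q}-\cfrac{([2]_q+q^2z)x}{[5]_q+\cfrac{q^2([3]_q-z)x}{\frac{q^3+1}{[3]_q}-\cfrac{([3]_q+q^3z)x}{\ddots}}}}}}}$$ where the pattern is: for each $n\ge1$ the denominator $[2n-1]_q$ is followed by $+\,q^{n-1}([n]_q-z)x$ over $\frac{q^n+1}{[n]_q}$, which is followed by $-\,([n]_q+q^nz)x$ over $[2n+1]_q$, and so on.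
   Context: $q$ is an indeterminate. The $q$-Bernoulli–Carlitz numbers $\beta_n\in\mathbb{Q}(q)$ are defined by: for all $n\ge0$, $q\sum_{k=0}^{n}\binom{n}{k}q^k\beta_k-\beta_n$ equals $q-1$ if $n=0$, $1$ if $n=1$, and $0$ if $n>1$. Let $\Psi$ be the linear form with $\Psi(x^n)=\beta_n$, extended linearly over $\mathbb{Q}(q)[z]$, and $\beta_n(z)=\Psi\big((z+(z(q-1)+1)x)^n\big)$ the $q$-Bernoulli–Carlitz polynomials; the integral is the ordinary integral of a polynomial in $y$. $[m]_q=(q^m-1)/(q-1)$. *)

theory Defs
  imports "HOL-Computational_Algebra.Polynomial" "HOL-Computational_Algebra.Formal_Power_Series" "HOL-Computational_Algebra.Fraction_Field"
begin

text \<open>The field Q(q) of rational functions in the indeterminate q, and the field Q(q)(z).\<close>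
type_synonym Kq = "rat poly fract"
type_synonym Lqz = "Kq poly fract"

definition qK :: Kq where "qK = Fract [:0, 1:] 1"

definition qL :: Lqz where "qL = Fract [:qK:] 1"
definition zL :: Lqz where "zL = Fract [:0, 1:] 1"

definition qint :: "'a::field \<Rightarrow> nat \<Rightarrow> 'a" where
  "qint q m = (q ^ m - 1) / (q - 1)"

definition is_qBC_numbers :: "(nat \<Rightarrow> Kq) \<Rightarrow> bool" where
  "is_qBC_numbers beta \<longleftrightarrow>
     (\<forall>n. qK * (\<Sum>k\<le>n. of_nat (n choose k) * qK ^ k * beta k) - beta n
          = (if n = 0 then qK - 1 else if n = 1 then 1 else 0))"

text \<open>The linear form Psi(x^k) = beta k, extended linearly over Q(q)[z];
  a polynomial in x with coefficients in Q(q)[z] is a Kq poly poly.\<close>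
definition Psi :: "(nat \<Rightarrow> Kq) \<Rightarrow> Kq poly poly \<Rightarrow> Kq poly" where
  "Psi beta P = (\<Sum>k\<le>degree P. coeff P k * [:beta k:])"

text \<open>q-Bernoulli-Carlitz polynomials beta_n(z) = Psi((z + (z(q-1)+1)x)^n).\<close>
definition qBC_poly :: "(nat \<Rightarrow> Kq) \<Rightarrow> nat \<Rightarrow> Kq poly" where
  "qBC_poly beta n = Psi beta ([: [:0, 1:], [:1, qK - 1:] :] ^ n)"

definition pint :: "'a::field_char_0 poly \<Rightarrow> 'a poly" where
  "pint p = (\<Sum>i\<le>degree p. monom (coeff p i / of_nat (Suc i)) (Suc i))"

definition pavg :: "'a::field_char_0 poly \<Rightarrow> 'a poly" where
  "pavg p = pint p div [:0, 1:]"

definition Bhat :: "(nat \<Rightarrow> Kq) \<Rightarrow> Lqz fps" where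
  "Bhat beta = Abs_fps (\<lambda>n. Fract (pavg (qBC_poly beta n)) 1)"

text \<open>Continued fraction b0 + a1 x/(b1 + a2 x/(b2 + ... + a_d x / b_d)), truncated at depth d,
  starting at index j.\<close>
fun cf_tail :: "(nat \<Rightarrow> 'a::field) \<Rightarrow> (nat \<Rightarrow> 'a) \<Rightarrow> nat \<Rightarrow> nat \<Rightarrow> 'a fps" where
  "cf_tail a b j 0 = fps_const (b j)"
| "cf_tail a b j (Suc d) =
     fps_const (b j) + fps_const (a (Suc j)) * fps_X * inverse (cf_tail a b (Suc j) d)"

definition cf_conv :: "(nat \<Rightarrow> 'a::field) \<Rightarrow> (nat \<Rightarrow> 'a) \<Rightarrow> nat \<Rightarrow> 'a fps" where
  "cf_conv a b d = inverse (cf_tail a b 0 d)"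

text \<open>Partial denominators: b(2n) = [2n+1]_q, b(2n+1) = (q^(n+1)+1)/[n+1]_q.\<close>
definition cfB :: "nat \<Rightarrow> Lqz" where
  "cfB j = (if even j then qint qL (j + 1)
            else (qL ^ ((j + 1) div 2) + 1) / qint qL ((j + 1) div 2))"

text \<open>Partial numerators (coefficient of x): a(2n+1) = q^n([n+1]_q - z),
  a(2n+2) = -([n+1]_q + q^(n+1) z).\<close>
definition cfA :: "nat \<Rightarrow> Lqz" where
  "cfA j = (if odd j then qL ^ ((j - 1) div 2) * (qint qL ((j + 1) div 2) - zL)
            else - (qint qL (j div 2) + qL ^ (j div 2) * zL))"

end

(*
  The convergents of a continued fraction with partial numerators a_j x and partial denominators
  b_j converge to H_1 / H_0 as soon as power series H_j with H_0(0) \<noteq> 0 satisfy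
  H_j = b_j H_(j+1) + a_(j+1) x H_(j+2): the tails then agree with H_j / H_(j+1) to ever higher order.

  Such series come from orthogonal polynomials. The coefficients of the given series are the
  moments \<Phi>(y^k) of a linear functional \<Phi> on \<rat>(q)(z)[y], and the defining recurrence of the
  \<beta>_n turns into the q-integration by parts formula z \<Phi>(\<Delta>h) = h(z) - h(0), where
  \<Delta>h(y) = (h(1 + q y) - h(y)) / ((1 + q y) - y). The Rodrigues-type polynomials
  P_n = \<Delta>^n (\<Prod>_(i<n) (y - [i]) (y - q^i z - [i])), and K_n defined likewise with the extra factor
  y - [n] and then divided by y, are therefore orthogonal for \<Phi> and for y \<Phi>. Comparing top
  coefficients and diagonal moments yields P_n = b_(2n+1) y K_n + a_(2n+2) P_(n+1) and
  K_n = b_(2n+2) P_(n+1) + a_(2n+3) K_(n+1), so the series \<Sum>_k \<Phi>(y^(k+n) P_n) x^k and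
  \<Sum>_k \<Phi>(y^(k+n+1) K_n) x^k satisfy that recurrence, and the first of them is the given series.
*)

theory Submission
  imports Defs
begin

unbundle fps_syntax

section \<open>Convergence of continued fractions\<close>

lemma fps_X_power_dvd_iff:
  fixes f :: "'a::comm_ring_1 fps"
  shows "fps_X ^ m dvd f \<longleftrightarrow> (\<forall>i<m. f $ i = 0)"
proof
  assume "fps_X ^ m dvd f"
  then obtain g where "f = fps_X ^ m * g" by (elim dvdE)
  then show "\<forall>i<m. f $ i = 0" by (simp add: fps_X_power_mult_nth)
next
  assume "\<forall>i<m. f $ i = 0"
  then have "f = fps_X ^ m * fps_shift m f"
    by (intro fps_ext) (simp add: fps_X_power_mult_nth)
  then show "fps_X ^ m dvd f" by (rule dvdI)
qed

context
  fixes a b :: "nat \<Rightarrow> 'a::field" and H :: "nat \<Rightarrow> 'a fps"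
  assumes H_rec: "\<And>j. H j = fps_const (b j) * H (Suc j) + fps_const (a (Suc j)) * fps_X * H (Suc (Suc j))"
    and b_nonzero: "\<And>j. b j \<noteq> 0"
begin

lemma cf_series_nth_0: "H j $ 0 = b j * H (Suc j) $ 0"
  by (subst H_rec) simp

lemma cf_series_nth_0_nonzero: "H 0 $ 0 \<noteq> 0 \<Longrightarrow> H j $ 0 \<noteq> 0"
proof (induction j)
  case (Suc j)
  then show ?case using cf_series_nth_0[of j] by simp
qed

text \<open>The tail and \<open>H j / H (j + 1)\<close> obey the same one-step recursion, which multiplies the
  error by \<open>x\<close>.\<close>
lemma inverse_cf_tail_approx:
  assumes H0: "H 0 $ 0 \<noteq> 0"
  shows "fps_X ^ Suc d dvd inverse (cf_tail a b j d) - H (Suc j) * inverse (H j)"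
proof (induction d arbitrary: j)
  case 0
  have "(inverse (cf_tail a b j 0) - H (Suc j) * inverse (H j)) $ 0 = 0"
    using cf_series_nth_0_nonzero[OF H0, of "Suc j"] b_nonzero[of j]
    by (simp add: cf_series_nth_0[of j] fps_const_inverse field_simps)
  then show ?case unfolding fps_X_power_dvd_iff by simp
next
  case (Suc d)
  have H_inv: "H i * inverse (H i) = 1" for i
    using cf_series_nth_0_nonzero[OF H0] by (rule inverse_mult_eq_1')
  define c where "c = cf_tail a b j (Suc d)"
  define T where "T = H j * inverse (H (Suc j))"
  have c0: "c $ 0 \<noteq> 0" using b_nonzero by (simp add: c_def)
  have "T - c = fps_const (a (Suc j)) * fps_X *
      (H (Suc (Suc j)) * inverse (H (Suc j)) - inverse (cf_tail a b (Suc j) d))"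
    unfolding T_def c_def by (subst H_rec) (simp add: algebra_simps H_inv)
  moreover obtain g where
    "H (Suc (Suc j)) * inverse (H (Suc j)) - inverse (cf_tail a b (Suc j) d) = fps_X ^ Suc d * g"
    using Suc.IH[of "Suc j"] dvd_diff_commute by (blast elim: dvdE)
  ultimately have "T - c = fps_X ^ Suc (Suc d) * (fps_const (a (Suc j)) * g)"
    by (simp add: ac_simps)
  then have "fps_X ^ Suc (Suc d) dvd T - c" by (rule dvdI)
  moreover have "inverse c - H (Suc j) * inverse (H j) = inverse c * (T - c) * H (Suc j) * inverse (H j)"
  proof -
    have "T * H (Suc j) = H j" using H_inv[of "Suc j"] by (simp add: T_def ac_simps)
    then have "inverse c * (T - c) * H (Suc j) * inverse (H j)
        = inverse c * (H j * inverse (H j)) - (inverse c * c) * H (Suc j) * inverse (H j)"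
      by (simp add: algebra_simps)
    then show ?thesis using inverse_mult_eq_1[OF c0] H_inv[of j] by (simp add: mult.commute)
  qed
  ultimately show ?case unfolding c_def by (metis dvd_mult dvd_mult2)
qed

lemma cf_conv_tendsto:
  assumes "H 0 $ 0 \<noteq> 0"
  shows "cf_conv a b \<longlonglongrightarrow> H 1 * inverse (H 0)"
proof (rule tendsto_fpsI)
  fix n
  have "(cf_conv a b d - H 1 * inverse (H 0)) $ n = 0" if "n \<le> d" for d
    using inverse_cf_tail_approx[OF assms, of d 0] that
    unfolding fps_X_power_dvd_iff cf_conv_def by simp
  then have "cf_conv a b d $ n = (H 1 * inverse (H 0)) $ n" if "n \<le> d" for d
    using that by simp
  then show "eventually (\<lambda>d. cf_conv a b d $ n = (H 1 * inverse (H 0)) $ n) sequentially"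
    unfolding eventually_sequentially by blast
qed

end

lemma fps_const_mult_X_mult_nth:
  "(fps_const c * fps_X * f) $ n = (if n = 0 then 0 else c * f $ (n - 1))"
  for c :: "'a::comm_ring_1"
proof -
  have "fps_const c * fps_X * f = fps_X * (fps_const c * f)"
    by (simp only: mult.commute[of "fps_const c" fps_X] mult.assoc)
  then show ?thesis by (simp add: fps_const_mult_left)
qed

lemma pcompose_power: "pcompose (p ^ n) r = pcompose p r ^ n"
  by (induction n) (simp_all add: pcompose_mult pcompose_1)

lemma pcompose_monom: "pcompose (monom c n) r = smult c (r ^ n)"
  by (simp add: monom_altdef pcompose_smult pcompose_power pcompose_pCons)

lemma smult_sum_right: "smult a (\<Sum>i\<in>S. f i) = (\<Sum>i\<in>S. smult a (f i))"
  by (induction S rule: infinite_finite_induct) (simp_all add: smult_add_right)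

lemma linear_poly_power: "[:1, c:] ^ n = (\<Sum>k\<le>n. monom (of_nat (n choose k) * c ^ k) k)"
proof -
  have "[:1, c:] = monom c 1 + 1" by (simp add: monom_Suc monom_0 one_pCons)
  then have "[:1, c:] ^ n = (\<Sum>k\<le>n. of_nat (n choose k) * monom c 1 ^ k * 1 ^ (n - k))"
    by (simp only: binomial_ring)
  also have "\<dots> = (\<Sum>k\<le>n. monom (of_nat (n choose k) * c ^ k) k)"
    by (intro sum.cong refl) (simp add: monom_power of_nat_poly smult_monom)
  finally show ?thesis .
qed

lemma pderiv_sum: "pderiv (\<Sum>x\<in>A. f x) = (\<Sum>x\<in>A. pderiv (f x))"
  by (induction A rule: infinite_finite_induct) (simp_all add: pderiv_add)

lemma X_mult_monom: "[:0, 1:] * monom (1::'a::comm_semiring_1) k = monom 1 (Suc k)"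
  by (simp add: monom_Suc)

lemma monom_mult_X_mult: "monom 1 k * ([:0, 1:] * p) = monom (1::'a::comm_semiring_1) (Suc k) * p"
  by (simp only: mult.assoc[symmetric] mult.commute[of "monom 1 k" "[:0, 1:]"] X_mult_monom)

lemma X_mult_monom_mult: "[:0, 1:] * (monom 1 k * p) = monom (1::'a::comm_semiring_1) (Suc k) * p"
  by (simp only: mult.assoc[symmetric] X_mult_monom)

lemma degree_le_of_top_coeff_eq_0:
  assumes "degree p \<le> Suc n" "coeff p (Suc n) = 0"
  shows "degree p \<le> n"
proof (rule ccontr)
  assume "\<not> degree p \<le> n"
  then have "degree p = Suc n" using assms(1) by simp
  then show False using assms(2) \<open>\<not> degree p \<le> n\<close> by (metis leading_coeff_0_iff degree_0 le0)
qed

lemma orthogonal_family_nondegenerate: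
  fixes L :: "'a::field poly \<Rightarrow> 'a" and Q :: "nat \<Rightarrow> 'a poly"
  assumes L_add: "\<And>p r. L (p + r) = L p + L r" and L_smult: "\<And>c p. L (smult c p) = c * L p"
    and degree_Q: "\<And>d. degree (Q d) = d" and Q_nonzero: "\<And>d. Q d \<noteq> 0"
    and orth: "\<And>d k. k < d \<Longrightarrow> L (monom 1 k * Q d) = 0"
    and diag: "\<And>d. L (monom 1 d * Q d) \<noteq> 0"
    and E: "\<And>k. k \<le> degree E \<Longrightarrow> L (monom 1 k * E) = 0"
  shows "E = 0"
  using E
proof (induction "degree E" arbitrary: E rule: less_induct)
  case less
  define d where "d = degree E"
  define c where "c = lead_coeff E / lead_coeff (Q d)"
  define E' where "E' = E - smult c (Q d)"
  have lc_Q: "coeff (Q d) d \<noteq> 0"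
    using Q_nonzero[of d] degree_Q[of d] by (metis leading_coeff_0_iff)
  have L_E': "L (monom 1 k * E') = L (monom 1 k * E) - c * L (monom 1 k * Q d)" for k
    using L_add[of "monom 1 k * E" "smult (- c) (monom 1 k * Q d)"] L_smult[of "- c"]
    by (simp add: E'_def right_diff_distrib mult_smult_right)
  have "E' = 0"
  proof (rule ccontr)
    assume "E' \<noteq> 0"
    have "coeff E' d = 0"
      using lc_Q degree_Q[of d] by (simp add: E'_def c_def d_def)
    moreover have "degree E' \<le> d"
      unfolding E'_def d_def by (rule degree_diff_le) (simp_all add: degree_Q)
    ultimately have lt: "degree E' < d"
      using \<open>E' \<noteq> 0\<close> by (metis le_neq_implies_less leading_coeff_0_iff)
    have "L (monom 1 k * E') = 0" if "k \<le> degree E'" for k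
      using L_E'[of k] less.prems[of k] orth[of k d] that lt d_def by simp
    then show False using less.hyps[of E'] lt \<open>E' \<noteq> 0\<close> d_def by blast
  qed
  then have "E = smult c (Q d)" by (simp add: E'_def)
  then have "L (monom 1 d * E) = c * L (monom 1 d * Q d)" by (simp add: L_smult mult_smult_right)
  then have "c = 0" using less.prems[of d] diag[of d] d_def by simp
  then show "E = 0" using \<open>E' = 0\<close> by (simp add: E'_def)
qed

lemma qint_0 [simp]: "qint q 0 = 0"
  by (simp add: qint_def)

lemma qint_1 [simp]: "(q::'a::field) \<noteq> 1 \<Longrightarrow> qint q (Suc 0) = 1"
  by (simp add: qint_def)

lemma qint_add: "qint (q::'a::field) (m + n) = qint q m + q ^ m * qint q n"
proof -
  have "qint q m + q ^ m * qint q n = (q ^ m - 1 + q ^ m * (q ^ n - 1)) / (q - 1)"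
    by (simp add: qint_def add_divide_distrib)
  also have "\<dots> = qint q (m + n)"
    by (simp add: qint_def power_add algebra_simps)
  finally show ?thesis ..
qed

lemma qint_Suc: "(q::'a::field) \<noteq> 1 \<Longrightarrow> qint q (Suc n) = 1 + q * qint q n"
  using qint_add[of q 1 n] by simp

lemma qint_Suc_right: "(q::'a::field) \<noteq> 1 \<Longrightarrow> qint q (Suc n) = qint q n + q ^ n"
  using qint_add[of q n 1] by simp

lemma qint_double: "qint (q::'a::field) (2 * n) = (q ^ n + 1) * qint q n"
  using qint_add[of q n n] by (simp only: mult_2) (simp add: algebra_simps)

definition to_fract :: "'a::idom \<Rightarrow> 'a fract" where
  "to_fract a = Fract a 1"

lemma to_fract_0 [simp]: "to_fract 0 = 0" by (simp add: to_fract_def Zero_fract_def)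
lemma to_fract_1 [simp]: "to_fract 1 = 1" by (simp add: to_fract_def One_fract_def)
lemma to_fract_add [simp]: "to_fract (a + b) = to_fract a + to_fract b" by (simp add: to_fract_def)
lemma to_fract_minus [simp]: "to_fract (- a) = - to_fract a" by (simp add: to_fract_def)
lemma to_fract_diff [simp]: "to_fract (a - b) = to_fract a - to_fract b" by (simp add: to_fract_def)
lemma to_fract_mult [simp]: "to_fract (a * b) = to_fract a * to_fract b" by (simp add: to_fract_def)
lemma to_fract_eq_iff [simp]: "to_fract a = to_fract b \<longleftrightarrow> a = b" by (simp add: to_fract_def eq_fract)
lemma to_fract_eq_0_iff [simp]: "to_fract a = 0 \<longleftrightarrow> a = 0" using to_fract_eq_iff[of a 0] by simp
lemma to_fract_power [simp]: "to_fract (a ^ n) = to_fract a ^ n" by (induction n) simp_all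
lemma to_fract_sum: "to_fract (\<Sum>x\<in>A. f x) = (\<Sum>x\<in>A. to_fract (f x))"
  by (induction A rule: infinite_finite_induct) simp_all

definition const_fract :: "'a::field \<Rightarrow> 'a poly fract" where
  "const_fract c = to_fract [:c:]"

definition fract_X :: "'a::idom poly fract" where
  "fract_X = to_fract [:0, 1:]"

lemma const_fract_0 [simp]: "const_fract 0 = 0" by (simp add: const_fract_def)
lemma const_fract_1 [simp]: "const_fract 1 = 1" by (simp add: const_fract_def flip: one_pCons)
lemma const_fract_add [simp]: "const_fract (a + b) = const_fract a + const_fract b"
  by (simp add: const_fract_def flip: to_fract_add)
lemma const_fract_minus [simp]: "const_fract (- a) = - const_fract a"
  by (simp add: const_fract_def flip: to_fract_minus)
lemma const_fract_diff [simp]: "const_fract (a - b) = const_fract a - const_fract b"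
  by (simp add: const_fract_def flip: to_fract_diff)
lemma const_fract_mult [simp]: "const_fract (a * b) = const_fract a * const_fract b"
  by (simp add: const_fract_def flip: to_fract_mult)
lemma const_fract_eq_iff [simp]: "const_fract a = const_fract b \<longleftrightarrow> a = b"
  by (simp add: const_fract_def)
lemma const_fract_power [simp]: "const_fract (a ^ n) = const_fract a ^ n"
  by (induction n) simp_all
lemma const_fract_of_nat [simp]: "const_fract (of_nat n) = of_nat n"
  by (induction n) simp_all
lemma const_fract_inverse [simp]: "const_fract (inverse a) = inverse (const_fract a)"
proof (cases "a = 0")
  case False
  then have "const_fract a * const_fract (inverse a) = 1" by (simp flip: const_fract_mult)
  then show ?thesis by (rule inverse_unique[symmetric])
qed simp
lemma const_fract_divide [simp]: "const_fract (a / b) = const_fract a / const_fract b"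
  by (simp add: divide_inverse)

lemma to_fract_const [simp]: "to_fract [:c:] = const_fract c"
  by (simp add: const_fract_def)

lemma to_fract_smult [simp]: "to_fract (smult c p) = const_fract c * to_fract p"
proof -
  have "smult c p = [:c:] * p" by simp
  then show ?thesis by (simp only: to_fract_mult to_fract_const)
qed

lemma to_fract_pCons: "to_fract (pCons a p) = const_fract a + fract_X * to_fract p"
proof -
  have "pCons a p = [:a:] + [:0, 1:] * p" by simp
  then show ?thesis by (simp only: to_fract_add to_fract_mult to_fract_const fract_X_def)
qed

lemma fract_X_power_ne_const: "m > 0 \<Longrightarrow> fract_X ^ m \<noteq> const_fract c"
proof
  assume "m > 0" "fract_X ^ m = const_fract c"
  then have "to_fract ([:0, 1:] ^ m) = to_fract [:c:]"
    by (simp only: fract_X_def const_fract_def to_fract_power)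
  then have "[:0, 1:] ^ m = [:c:]" by (simp only: to_fract_eq_iff)
  then have "degree ([:0, 1:] ^ m :: 'a poly) = 0" by simp
  with \<open>m > 0\<close> show False by (simp add: degree_power_eq)
qed

lemma const_fract_add_mult_X_nonzero:
  assumes "b \<noteq> 0"
  shows "const_fract a + const_fract b * fract_X \<noteq> 0"
proof -
  have "const_fract a + const_fract b * fract_X = to_fract [:a, b:]"
    by (simp add: to_fract_pCons mult.commute)
  then show ?thesis using assms by simp
qed

section \<open>The \<open>q\<close>-difference operator\<close>

locale q_calculus =
  fixes q :: "'a::field"
  assumes q_nonzero [simp]: "q \<noteq> 0"
    and q_power_ne_1: "m > 0 \<Longrightarrow> q ^ m \<noteq> 1"
begin

lemma q_ne_1 [simp]: "q \<noteq> 1"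
  using q_power_ne_1[of 1] by simp

lemma qint_nonzero: "m > 0 \<Longrightarrow> qint q m \<noteq> 0"
  using q_power_ne_1 by (simp add: qint_def)

definition qshift :: "'a poly" where
  "qshift = [:1, q:]"

definition qweight :: "'a poly" where
  "qweight = [:1, q - 1:]"

text \<open>The difference quotient \<open>(h(1 + q y) - h(y)) / ((1 + q y) - y)\<close>.\<close>
definition qdiff :: "'a poly \<Rightarrow> 'a poly" where
  "qdiff h = (pcompose h qshift - h) div qweight"

lemma qweight_nonzero [simp]: "qweight \<noteq> 0"
  by (simp add: qweight_def)

lemma degree_qweight [simp]: "degree qweight = 1"
  by (simp add: qweight_def)

lemma poly_qshift [simp]: "poly qshift y = 1 + q * y"
  by (simp add: qshift_def)

lemma poly_qweight [simp]: "poly qweight y = 1 + (q - 1) * y"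
  by (simp add: qweight_def)

lemma qweight_dvd: "qweight dvd pcompose h qshift - h"
proof -
  define c where "c = 1 / (q - 1)"
  have w: "qweight = smult (q - 1) [:c, 1:]" by (simp add: qweight_def c_def)
  have "poly (pcompose h qshift - h) (- c) = 0"
    by (simp add: poly_pcompose c_def field_simps)
  then have "[:c, 1:] dvd pcompose h qshift - h" by (simp add: dvd_iff_poly_eq_0)
  then show ?thesis unfolding w by (rule smult_dvd) simp
qed

lemma qweight_mult_qdiff: "qweight * qdiff h = pcompose h qshift - h"
  unfolding qdiff_def using qweight_dvd by (rule dvd_mult_div_cancel)

lemma qdiff_eqI: "qweight * g = pcompose h qshift - h \<Longrightarrow> qdiff h = g"
  by (metis qweight_mult_qdiff qweight_nonzero mult_left_cancel)

lemma qdiff_add: "qdiff (f + g) = qdiff f + qdiff g"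
  by (rule qdiff_eqI) (simp add: distrib_left qweight_mult_qdiff pcompose_add)

lemma qdiff_const [simp]: "qdiff [:c:] = 0"
  by (rule qdiff_eqI) simp

lemma qdiff_0 [simp]: "qdiff 0 = 0"
  using qdiff_const[of 0] by simp

lemma qdiff_mult: "qdiff (f * g) = pcompose f qshift * qdiff g + g * qdiff f"
proof (rule qdiff_eqI)
  have "qweight * (pcompose f qshift * qdiff g + g * qdiff f)
      = pcompose f qshift * (qweight * qdiff g) + g * (qweight * qdiff f)"
    by (simp add: algebra_simps)
  also have "\<dots> = pcompose (f * g) qshift - f * g"
    unfolding qweight_mult_qdiff by (simp add: pcompose_mult algebra_simps)
  finally show "qweight * (pcompose f qshift * qdiff g + g * qdiff f) = pcompose (f * g) qshift - f * g" .
qed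

lemma qdiff_qweight_mult: "qdiff (qweight * p) = smult q (pcompose p qshift) - p"
proof (rule qdiff_eqI)
  have "pcompose qweight qshift = smult q qweight"
    by (simp add: qweight_def qshift_def pcompose_pCons algebra_simps)
  then show "qweight * (smult q (pcompose p qshift) - p) = pcompose (qweight * p) qshift - qweight * p"
    by (simp add: pcompose_mult algebra_simps)
qed

lemma degree_qdiff_le: "degree (qdiff h) \<le> degree h - 1"
proof (cases "qdiff h = 0")
  case False
  then have "degree (qweight * qdiff h) = 1 + degree (qdiff h)"
    by (simp add: degree_mult_eq)
  moreover have "degree (qweight * qdiff h) \<le> degree h"
    unfolding qweight_mult_qdiff
    by (rule degree_diff_le) (simp_all add: degree_pcompose qshift_def)
  ultimately show ?thesis by simp
qed simp

lemma coeff_qdiff_pred_degree: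
  assumes "degree h > 0"
  shows "coeff (qdiff h) (degree h - 1) = qint q (degree h) * lead_coeff h"
proof -
  let ?d = "degree h"
  have top: "coeff (qdiff h) ?d = 0"
    using degree_qdiff_le[of h] assms by (intro coeff_eq_0) simp
  have "coeff (pcompose h qshift) ?d = lead_coeff h * q ^ ?d"
    using lead_coeff_comp[of qshift h] degree_pcompose[of h qshift] by (simp add: qshift_def)
  then have "lead_coeff h * (q ^ ?d - 1) = coeff (qweight * qdiff h) ?d"
    by (simp add: qweight_mult_qdiff algebra_simps)
  also have "\<dots> = (q - 1) * coeff (qdiff h) (?d - 1)"
    using assms top by (cases ?d) (simp_all add: qweight_def coeff_pCons)
  finally show ?thesis by (simp add: qint_def field_simps)
qed

lemma degree_qdiff:
  assumes "degree h > 0"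
  shows "degree (qdiff h) = degree h - 1"
proof -
  have "coeff (qdiff h) (degree h - 1) \<noteq> 0"
    using coeff_qdiff_pred_degree[OF assms] qint_nonzero[of "degree h"] assms
    by (cases "h = 0") simp_all
  then have "degree h - 1 \<le> degree (qdiff h)" by (rule le_degree)
  then show ?thesis using degree_qdiff_le[of h] by simp
qed

lemma lead_coeff_qdiff: "degree h > 0 \<Longrightarrow> lead_coeff (qdiff h) = qint q (degree h) * lead_coeff h"
  using coeff_qdiff_pred_degree degree_qdiff by simp

definition qfalling :: "nat \<Rightarrow> nat \<Rightarrow> 'a" where
  "qfalling D j = (\<Prod>i<j. qint q (D - i))"

lemma qfalling_nonzero: "j \<le> D \<Longrightarrow> qfalling D j \<noteq> 0"
  by (auto simp: qfalling_def qint_nonzero)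

lemma qfalling_Suc_Suc: "qfalling (Suc D) (Suc j) = qint q (Suc D) * qfalling D j"
  unfolding qfalling_def prod.lessThan_Suc_shift by simp

lemma qfalling_Suc: "qfalling D (Suc j) = qfalling D j * qint q (D - j)"
  by (simp add: qfalling_def)

lemma qdiff_iter_degree_lead_coeff:
  assumes "j \<le> degree h"
  shows "degree ((qdiff ^^ j) h) = degree h - j \<and>
    lead_coeff ((qdiff ^^ j) h) = qfalling (degree h) j * lead_coeff h"
  using assms
proof (induction j)
  case (Suc j)
  then have IH: "degree ((qdiff ^^ j) h) = degree h - j"
      "lead_coeff ((qdiff ^^ j) h) = qfalling (degree h) j * lead_coeff h" by auto
  have pos: "degree ((qdiff ^^ j) h) > 0" using IH(1) Suc.prems by simp
  show ?case
    using degree_qdiff[OF pos] lead_coeff_qdiff[OF pos] IH Suc.prems by (simp add: qfalling_def mult_ac)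
qed (simp add: qfalling_def)

lemma degree_qdiff_iter: "j \<le> degree h \<Longrightarrow> degree ((qdiff ^^ j) h) = degree h - j"
  using qdiff_iter_degree_lead_coeff by blast

lemma lead_coeff_qdiff_iter:
  "j \<le> degree h \<Longrightarrow> lead_coeff ((qdiff ^^ j) h) = qfalling (degree h) j * lead_coeff h"
  using qdiff_iter_degree_lead_coeff by blast

definition qnode :: "'a \<Rightarrow> nat \<Rightarrow> 'a" where
  "qnode a i = q ^ i * a + qint q i"

lemma qnode_0 [simp]: "qnode a 0 = a"
  by (simp add: qnode_def)

lemma qnode_Suc: "qnode a (Suc i) = 1 + q * qnode a i"
  by (simp add: qnode_def qint_Suc algebra_simps)

lemma poly_qweight_qnode: "poly qweight (qnode a i) = q ^ i * poly qweight a"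
proof (induction i)
  case (Suc i)
  have "poly qweight (qnode a (Suc i)) = q * poly qweight (qnode a i)"
    by (simp add: qnode_Suc algebra_simps)
  then show ?case using Suc by simp
qed simp

definition node_poly :: "'a \<Rightarrow> nat \<Rightarrow> 'a poly" where
  "node_poly a m = (\<Prod>i<m. [:- qnode a i, 1:])"

lemma node_poly_0 [simp]: "node_poly a 0 = 1"
  by (simp add: node_poly_def)

lemma node_poly_Suc: "node_poly a (Suc m) = node_poly a m * [:- qnode a m, 1:]"
  by (simp add: node_poly_def)

lemma poly_node_poly_eq_0: "i < m \<Longrightarrow> poly (node_poly a m) (qnode a i) = 0"
  by (induction m) (auto simp: node_poly_Suc less_Suc_eq)

lemma degree_lead_coeff_node_poly: "degree (node_poly a m) = m \<and> lead_coeff (node_poly a m) = 1"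
proof (induction m)
  case (Suc m)
  have nz: "node_poly a m \<noteq> 0" using Suc by auto
  have L: "[:- qnode a m, 1:] \<noteq> 0" "degree [:- qnode a m, 1:] = 1" "lead_coeff [:- qnode a m, 1:] = 1"
    by simp_all
  show ?case unfolding node_poly_Suc
    using degree_mult_eq[OF nz L(1)] lead_coeff_mult[of "node_poly a m" "[:- qnode a m, 1:]"] Suc L
    by (auto simp del: mult_pCons_right mult_pCons_left pCons_eq_0_iff)
qed simp

lemma degree_node_poly [simp]: "degree (node_poly a m) = m"
  using degree_lead_coeff_node_poly by blast

lemma coeff_node_poly_degree [simp]: "coeff (node_poly a m) m = 1"
  using degree_lead_coeff_node_poly[of a m] by simp

lemma node_poly_nonzero [simp]: "node_poly a m \<noteq> 0"
  using coeff_node_poly_degree[of a m] by (metis coeff_0 zero_neq_one)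

lemma pcompose_node_poly:
  "pcompose (node_poly a (Suc m)) qshift = [:1 - a, q:] * smult (q ^ m) (node_poly a m)"
proof (induction m)
  case 0
  then show ?case by (simp add: node_poly_def qshift_def pcompose_pCons)
next
  case (Suc m)
  have "pcompose [:- qnode a (Suc m), 1:] qshift = smult q [:- qnode a m, 1:]"
    by (simp add: qshift_def qnode_Suc pcompose_pCons algebra_simps)
  then show ?case
    using Suc by (simp only: node_poly_Suc[of a "Suc m"] pcompose_mult)
      (simp only: node_poly_Suc[of a m] mult_smult_left mult_smult_right smult_smult mult_ac power_Suc)
qed

lemma qdiff_node_poly: "qdiff (node_poly a (Suc m)) = smult (qint q (Suc m)) (node_poly a m)"
proof (rule qdiff_eqI)
  have "pcompose (node_poly a (Suc m)) qshift - node_poly a (Suc m)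
      = node_poly a m * (smult (q ^ m) [:1 - a, q:] - [:- qnode a m, 1:])"
    unfolding pcompose_node_poly
    unfolding node_poly_Suc[of a m] right_diff_distrib mult_smult_right
    by (simp only: mult.commute)
  also have "smult (q ^ m) [:1 - a, q:] - [:- qnode a m, 1:] = smult (qint q (Suc m)) qweight"
  proof -
    have "q ^ m * (1 - a) + qnode a m = qint q (Suc m)"
      by (simp add: qnode_def qint_Suc_right algebra_simps)
    moreover have "q ^ m * q - 1 = qint q (Suc m) * (q - 1)"
      by (simp add: qint_def)
    ultimately show ?thesis by (simp add: qweight_def)
  qed
  finally show "qweight * smult (qint q (Suc m)) (node_poly a m)
      = pcompose (node_poly a (Suc m)) qshift - node_poly a (Suc m)"
    by (simp add: mult_ac del: mult_pCons_left mult_pCons_right)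
qed

lemma poly_qdiff_eq_0:
  assumes "poly qweight a \<noteq> 0" "poly h (qnode a i) = 0" "poly h (qnode a (Suc i)) = 0"
  shows "poly (qdiff h) (qnode a i) = 0"
proof -
  have "poly (qweight * qdiff h) (qnode a i) = 0"
    using assms(2,3) by (simp add: qweight_mult_qdiff poly_pcompose qnode_Suc)
  moreover have "poly qweight (qnode a i) \<noteq> 0"
    using assms(1) by (simp only: poly_qweight_qnode) simp
  ultimately show ?thesis by simp
qed

lemma poly_qdiff_iter_eq_0:
  assumes "poly qweight a \<noteq> 0" "\<And>i. i < m \<Longrightarrow> poly h (qnode a i) = 0" "i + j < m"
  shows "poly ((qdiff ^^ j) h) (qnode a i) = 0"
  using assms(3)
proof (induction j arbitrary: i)
  case (Suc j)
  then show ?case using poly_qdiff_eq_0[OF assms(1)] by simp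
qed (use assms(2) in simp)

definition qshift_inv :: "'a poly" where
  "qshift_inv = [:- 1 / q, 1 / q:]"

definition qdiff_adj :: "'a poly \<Rightarrow> 'a poly" where
  "qdiff_adj f = qdiff (pcompose f qshift_inv)"

lemma pcompose_qshift_inv_qshift [simp]: "pcompose (pcompose f qshift_inv) qshift = f"
proof -
  have "pcompose qshift_inv qshift = [:0, 1:]"
    by (simp add: qshift_inv_def qshift_def pcompose_pCons field_simps)
  then show ?thesis by (simp add: pcompose_assoc[symmetric])
qed

lemma degree_pcompose_qshift_inv [simp]: "degree (pcompose f qshift_inv) = degree f"
  by (simp add: degree_pcompose qshift_inv_def)

lemma qdiff_adj_iter_eq_0: "degree f < j \<Longrightarrow> (qdiff_adj ^^ j) f = 0"
proof (induction j arbitrary: f)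
  case (Suc j)
  have "degree (qdiff_adj f) \<le> degree f - 1"
    using degree_qdiff_le[of "pcompose f qshift_inv"] by (simp add: qdiff_adj_def)
  show ?case
  proof (cases "degree f = 0")
    case True
    then obtain c where "f = [:c:]" by (elim degree_eq_zeroE)
    then have "qdiff_adj f = 0" by (simp add: qdiff_adj_def)
    moreover have "(qdiff_adj ^^ i) 0 = 0" for i
      by (induction i) (simp_all add: qdiff_adj_def)
    ultimately show ?thesis by (simp add: funpow_Suc_right del: funpow.simps)
  next
    case False
    then show ?thesis
      using Suc \<open>degree (qdiff_adj f) \<le> degree f - 1\<close>
      by (simp add: funpow_Suc_right del: funpow.simps)
  qed
qed simp

definition qdiff_adj_lc :: "nat \<Rightarrow> 'a" where
  "qdiff_adj_lc n = (\<Prod>k<n. qint q (Suc k) / q ^ Suc k)"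

lemma qdiff_adj_lc_nonzero: "qdiff_adj_lc n \<noteq> 0"
  by (simp add: qdiff_adj_lc_def qint_nonzero)

lemma qdiff_adj_iter_degree: "degree f = n \<Longrightarrow> (qdiff_adj ^^ n) f = [:lead_coeff f * qdiff_adj_lc n:]"
proof (induction n arbitrary: f)
  case 0
  then show ?case by (auto simp: qdiff_adj_lc_def elim!: degree_eq_zeroE)
next
  case (Suc n)
  let ?g = "pcompose f qshift_inv"
  have "degree ?g = Suc n" using Suc.prems by simp
  then have "degree (qdiff_adj f) = n"
      "lead_coeff (qdiff_adj f) = qint q (Suc n) * (lead_coeff f * (1 / q) ^ Suc n)"
    using degree_qdiff[of ?g] lead_coeff_qdiff[of ?g] lead_coeff_comp[of qshift_inv f] Suc.prems
    by (simp_all add: qdiff_adj_def qshift_inv_def)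
  then show ?case
    using Suc.IH[of "qdiff_adj f"]
    by (simp add: funpow_Suc_right qdiff_adj_lc_def field_simps del: funpow.simps)
qed

lemma qdiff_adj_iter_monom: "(qdiff_adj ^^ n) (monom 1 n) = [:qdiff_adj_lc n:]"
  using qdiff_adj_iter_degree[of "monom 1 n" n] by (simp add: degree_monom_eq)

lemma qdiff_node_poly_mult:
  "qdiff (node_poly u (Suc a) * node_poly v (Suc b)) = node_poly u a * node_poly v b *
     (smult (q ^ a * qint q (Suc b)) [:1 - u, q:] + smult (qint q (Suc a)) [:- qnode v b, 1:])"
proof -
  have "qdiff (node_poly u (Suc a) * node_poly v (Suc b))
      = ([:1 - u, q:] * smult (q ^ a) (node_poly u a)) * smult (qint q (Suc b)) (node_poly v b)
        + (node_poly v b * [:- qnode v b, 1:]) * smult (qint q (Suc a)) (node_poly u a)"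
    by (simp only: qdiff_mult, simp only: pcompose_node_poly qdiff_node_poly,
        simp only: node_poly_Suc[of v b])
  then show ?thesis
    by (simp only: distrib_left mult_smult_left mult_smult_right smult_smult mult_ac)
qed

end

lemma qK_eq_fract_X: "qK = fract_X"
  by (simp add: qK_def fract_X_def to_fract_def)

lemma qL_eq_const_fract: "qL = const_fract qK"
  by (simp add: qL_def const_fract_def to_fract_def)

lemma zL_eq_fract_X: "zL = fract_X"
  by (simp add: zL_def fract_X_def to_fract_def)

lemma qK_nonzero: "qK \<noteq> 0"
  using fract_X_power_ne_const[of 1 0] by (simp add: qK_eq_fract_X)

lemma qK_power_ne_1: "m > 0 \<Longrightarrow> qK ^ m \<noteq> 1"
  using fract_X_power_ne_const[of m 1] by (simp add: qK_eq_fract_X)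

lemma qK_power_ne_minus_1: "qK ^ m \<noteq> - 1"
proof (cases "m = 0")
  case True
  have "const_fract (1::rat) \<noteq> const_fract (- 1)" by simp
  then show ?thesis using True by simp
next
  case False
  then show ?thesis using fract_X_power_ne_const[of m "- 1"] by (simp add: qK_eq_fract_X)
qed

lemma qL_power_ne_minus_1: "qL ^ m \<noteq> - 1"
proof
  assume "qL ^ m = - 1"
  then have "const_fract (qK ^ m) = const_fract (- 1)" by (simp add: qL_eq_const_fract)
  then show False using qK_power_ne_minus_1 by (simp only: const_fract_eq_iff)
qed

interpretation q_calculus qL
proof
  show "qL \<noteq> 0"
  proof
    assume "qL = 0"
    then have "const_fract qK = const_fract 0" by (simp add: qL_eq_const_fract)
    then show False using qK_nonzero by (simp only: const_fract_eq_iff)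
  qed
  show "qL ^ m \<noteq> 1" if "m > 0" for m
  proof
    assume "qL ^ m = 1"
    then have "const_fract (qK ^ m) = const_fract 1" by (simp add: qL_eq_const_fract)
    then show False using qK_power_ne_1[OF that] by (simp only: const_fract_eq_iff)
  qed
qed

lemma qint_qL: "qint qL m = const_fract (qint qK m)"
  by (simp add: qint_def qL_eq_const_fract)

lemma qint_qL_minus_zL_nonzero: "qint qL m - zL \<noteq> 0"
  using const_fract_add_mult_X_nonzero[of "- 1" "qint qK m"]
  by (simp add: qint_qL zL_eq_fract_X)

lemma qnode_zL_nonzero: "qnode zL m \<noteq> 0"
proof -
  have "qnode zL m = const_fract (qint qK m) + const_fract (qK ^ m) * fract_X"
    by (simp add: qnode_def qint_qL zL_eq_fract_X mult.commute flip: qL_eq_const_fract)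
  also have "\<dots> \<noteq> 0" by (rule const_fract_add_mult_X_nonzero) (simp add: qK_nonzero)
  finally show ?thesis .
qed

lemma poly_qweight_zL_nonzero: "poly qweight zL \<noteq> 0"
proof -
  have "poly qweight zL = const_fract 1 + const_fract (qK - 1) * fract_X"
    by (simp add: zL_eq_fract_X flip: qL_eq_const_fract)
  also have "\<dots> \<noteq> 0" by (rule const_fract_add_mult_X_nonzero) (use qK_power_ne_1[of 1] in simp)
  finally show ?thesis .
qed

lemma zL_nonzero [simp]: "zL \<noteq> 0"
  using fract_X_power_ne_const[of 1 0] by (simp add: zL_eq_fract_X)

lemma Psi_eq_sum:
  assumes "degree P \<le> N"
  shows "Psi beta P = (\<Sum>k\<le>N. coeff P k * [:beta k:])"
  unfolding Psi_def by (rule sum.mono_neutral_left) (use assms in \<open>auto simp: coeff_eq_0\<close>)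

lemma Psi_add: "Psi beta (P + Q) = Psi beta P + Psi beta Q"
proof -
  let ?N = "max (degree P) (degree Q)"
  have "degree (P + Q) \<le> ?N" by (rule degree_add_le) auto
  then show ?thesis
    by (simp add: Psi_eq_sum[of _ ?N] Psi_eq_sum[of P ?N] Psi_eq_sum[of Q ?N] sum.distrib
        smult_add_right)
qed

lemma Psi_0 [simp]: "Psi beta 0 = 0"
  by (simp add: Psi_def)

lemma Psi_minus: "Psi beta (- P) = - Psi beta P"
  by (simp add: Psi_def sum_negf)

lemma Psi_diff: "Psi beta (P - Q) = Psi beta P - Psi beta Q"
  using Psi_add[of beta P "- Q"] by (simp add: Psi_minus)

lemma Psi_smult: "Psi beta (smult c P) = c * Psi beta P"
  by (cases "c = 0") (simp_all add: Psi_def sum_distrib_left mult.assoc)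

lemma Psi_sum: "Psi beta (\<Sum>x\<in>A. f x) = (\<Sum>x\<in>A. Psi beta (f x))"
  by (induction A rule: infinite_finite_induct) (simp_all add: Psi_add)

lemma Psi_monom: "Psi beta (monom c k) = smult (beta k) c"
proof -
  have "Psi beta (monom c k) = (\<Sum>i\<le>k. coeff (monom c k) i * [:beta i:])"
    by (rule Psi_eq_sum) (simp add: degree_monom_le)
  also have "\<dots> = (\<Sum>i\<le>k. if i = k then c * [:beta k:] else 0)"
    by (intro sum.cong refl) (auto simp: coeff_monom)
  finally show ?thesis by simp
qed

definition xshift :: "Kq poly poly" where
  "xshift = [:1, [:qK:]:]"

lemma Psi_xshift_power: "Psi beta (xshift ^ n) = [:\<Sum>k\<le>n. of_nat (n choose k) * qK ^ k * beta k:]"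
  by (simp add: xshift_def linear_poly_power Psi_sum Psi_monom poly_const_pow of_nat_poly sum_to_poly
      ac_simps)

lemma Psi_qBC_recurrence_monom:
  assumes "is_qBC_numbers beta"
  shows "Psi beta (smult [:qK:] (pcompose (monom c n) xshift) - monom c n)
       = smult (qK - 1) (coeff (monom c n) 0) + coeff (monom c n) 1"
proof -
  define S where "S = (\<Sum>k\<le>n. of_nat (n choose k) * qK ^ k * beta k)"
  have rec: "qK * S - beta n = (if n = 0 then qK - 1 else if n = 1 then 1 else 0)"
    using assms unfolding is_qBC_numbers_def S_def by blast
  have "Psi beta (smult [:qK:] (pcompose (monom c n) xshift) - monom c n) = smult (qK * S - beta n) c"
    by (simp add: pcompose_monom Psi_diff Psi_smult Psi_monom Psi_xshift_power S_def
        algebra_simps smult_diff_left)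
  then show ?thesis unfolding rec by (auto simp: coeff_monom)
qed

lemma Psi_qBC_recurrence:
  assumes "is_qBC_numbers beta"
  shows "Psi beta (smult [:qK:] (pcompose f xshift) - f) = smult (qK - 1) (coeff f 0) + coeff f 1"
proof -
  let ?m = "\<lambda>i. monom (coeff f i) i"
  have "smult [:qK:] (pcompose f xshift) - f
      = (\<Sum>i\<le>degree f. smult [:qK:] (pcompose (?m i) xshift) - ?m i)"
    by (subst (1 2) poly_as_sum_of_monoms[symmetric])
      (simp add: pcompose_sum smult_sum_right sum_subtractf)
  then have "Psi beta (smult [:qK:] (pcompose f xshift) - f)
      = (\<Sum>i\<le>degree f. smult (qK - 1) (coeff (?m i) 0) + coeff (?m i) 1)"
    by (simp add: Psi_sum Psi_qBC_recurrence_monom[OF assms])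
  also have "\<dots> = smult (qK - 1) (\<Sum>i\<le>degree f. coeff (?m i) 0) + (\<Sum>i\<le>degree f. coeff (?m i) 1)"
    by (simp only: sum.distrib smult_sum_right)
  also have "\<dots> = smult (qK - 1) (coeff f 0) + coeff f 1"
    by (simp only: coeff_sum[symmetric] poly_as_sum_of_monoms)
  finally show ?thesis .
qed

definition qBC_base :: "Kq poly poly" where
  "qBC_base = [:[:0, 1:], [:1, qK - 1:]:]"

lemma qBC_poly_eq_Psi: "qBC_poly beta n = Psi beta (qBC_base ^ n)"
  by (simp add: qBC_poly_def qBC_base_def)

lemma coeff_qBC_base_power:
  "coeff (qBC_base ^ n) 0 = [:0, 1:] ^ n \<and>
   coeff (qBC_base ^ n) 1 = of_nat n * [:0, 1:] ^ (n - 1) * [:1, qK - 1:]"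
proof (induction n)
  case (Suc n)
  have "of_nat n * [:0, 1:] ^ n * [:1, qK - 1:] + [:1, qK - 1:] * [:0, 1:] ^ n
      = of_nat (Suc n) * [:0, 1:] ^ n * [:1, qK - 1:]"
    by (simp add: algebra_simps)
  moreover have "[:0, 1:] * [:0, 1:] ^ (n - 1) = ([:0, 1:] ^ n :: Kq poly)" if "n > 0"
    using that by (cases n) simp_all
  ultimately show ?case
    using Suc by (cases "n = 0") (simp_all add: qBC_base_def coeff_mult algebra_simps)
qed simp

lemma pcompose_qBC_base_xshift: "pcompose qBC_base xshift = 1 + smult [:qK:] qBC_base"
  by (simp add: qBC_base_def xshift_def pcompose_pCons algebra_simps one_pCons)

lemma Psi_pcompose_qBC_base_power:
  "Psi beta (pcompose (qBC_base ^ n) xshift)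
     = (\<Sum>k\<le>n. smult (of_nat (n choose k) * qK ^ k) (qBC_poly beta k))"
proof -
  have "pcompose (qBC_base ^ n) xshift
      = (\<Sum>k\<le>n. of_nat (n choose k) * smult [:qK:] qBC_base ^ k * 1 ^ (n - k))"
    by (simp add: pcompose_power pcompose_qBC_base_xshift binomial_ring add.commute[of 1])
  also have "\<dots> = (\<Sum>k\<le>n. smult [:of_nat (n choose k) * qK ^ k:] (qBC_base ^ k))"
    by (intro sum.cong refl) (simp add: smult_power of_nat_poly poly_const_pow)
  finally show ?thesis by (simp add: Psi_sum Psi_smult qBC_poly_eq_Psi)
qed

lemma pderiv_linear_mult_X_power:
  fixes c :: "'a::field"
  shows "pderiv ([:1, c:] * [:0, 1:] ^ n) = smult c ([:0, 1:] ^ n) + of_nat n * [:0, 1:] ^ (n - 1) * [:1, c:]"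
proof -
  have "pderiv [:0, 1:] = (1 :: 'a poly)" "pderiv [:1, c:] = [:c:]"
    by (simp_all add: pderiv_pCons)
  then have "pderiv ([:1, c:] * [:0, 1:] ^ n)
      = [:1, c:] * smult (of_nat n) ([:0, 1:] ^ (n - 1) * 1) + [:0, 1:] ^ n * [:c:]"
    by (simp only: pderiv_mult pderiv_power)
  then show ?thesis by (simp add: of_nat_poly mult.commute)
qed

lemma qBC_poly_recurrence:
  assumes "is_qBC_numbers beta"
  shows "smult qK (\<Sum>k\<le>n. smult (of_nat (n choose k) * qK ^ k) (qBC_poly beta k)) - qBC_poly beta n
       = pderiv ([:1, qK - 1:] * [:0, 1:] ^ n)"
proof -
  have "Psi beta (smult [:qK:] (pcompose (qBC_base ^ n) xshift) - qBC_base ^ n)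
      = smult (qK - 1) (coeff (qBC_base ^ n) 0) + coeff (qBC_base ^ n) 1"
    by (rule Psi_qBC_recurrence[OF assms])
  moreover have "Psi beta (smult [:qK:] (pcompose (qBC_base ^ n) xshift) - qBC_base ^ n)
     = smult qK (\<Sum>k\<le>n. smult (of_nat (n choose k) * qK ^ k) (qBC_poly beta k)) - qBC_poly beta n"
    by (simp add: Psi_diff Psi_smult Psi_pcompose_qBC_base_power qBC_poly_eq_Psi)
  ultimately show ?thesis by (simp only: coeff_qBC_base_power pderiv_linear_mult_X_power)
qed

lemma pderiv_pint: "pderiv (pint p) = (p :: 'a::field_char_0 poly)"
proof -
  have "pderiv (pint p) = (\<Sum>i\<le>degree p. monom (coeff p i) i)"
    unfolding pint_def pderiv_sum
    by (intro sum.cong refl) (simp add: pderiv_monom del: of_nat_Suc)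
  then show ?thesis by (simp add: poly_as_sum_of_monoms)
qed

lemma poly_pint_0 [simp]: "poly (pint p) 0 = 0"
  by (simp add: pint_def poly_sum poly_monom)

lemma pint_eq_X_mult_pavg: "pint p = [:0, 1:] * pavg p"
proof -
  have "[:0, 1:] dvd pint p"
    using dvd_iff_poly_eq_0[of 0 "pint p"] by simp
  then show ?thesis unfolding pavg_def by (rule dvd_mult_div_cancel[symmetric])
qed

lemma poly_eqI_pderiv:
  fixes F G :: "'a::field_char_0 poly"
  assumes "pderiv F = pderiv G" "poly F 0 = poly G 0"
  shows "F = G"
proof -
  have "degree (F - G) = 0" using assms(1) by (simp add: pderiv_diff pderiv_eq_0_iff[symmetric])
  then obtain c where c: "F - G = [:c:]" by (elim degree_eq_zeroE)
  have "c = 0" using arg_cong[OF c, of "\<lambda>p. poly p 0"] assms(2) by simp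
  then show ?thesis using c by simp
qed

lemma pint_qBC_poly_recurrence:
  assumes "is_qBC_numbers beta"
  shows "smult qK (\<Sum>k\<le>n. smult (of_nat (n choose k) * qK ^ k) (pint (qBC_poly beta k)))
           - pint (qBC_poly beta n)
       = [:1, qK - 1:] * [:0, 1:] ^ n - (if n = 0 then 1 else 0)"
  by (rule poly_eqI_pderiv)
    (simp_all add: pderiv_diff pderiv_smult pderiv_sum pderiv_pint poly_sum
      qBC_poly_recurrence[OF assms])

definition moment :: "(nat \<Rightarrow> Kq) \<Rightarrow> nat \<Rightarrow> Lqz" where
  "moment beta k = to_fract (pavg (qBC_poly beta k))"

lemma Bhat_eq_moment: "Bhat beta = Abs_fps (moment beta)"
  unfolding Bhat_def moment_def[abs_def] to_fract_def ..

lemma moment_recurrence: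
  assumes "is_qBC_numbers beta"
  shows "zL * (qL * (\<Sum>k\<le>n. of_nat (n choose k) * qL ^ k * moment beta k) - moment beta n)
       = (1 + (qL - 1) * zL) * zL ^ n - (if n = 0 then 1 else 0)"
proof -
  have pint: "to_fract (pint (qBC_poly beta k)) = zL * moment beta k" for k
    by (simp only: pint_eq_X_mult_pavg to_fract_mult moment_def zL_eq_fract_X fract_X_def)
  have "to_fract [:1, qK - 1:] = 1 + (qL - 1) * zL"
    by (simp add: to_fract_pCons qL_eq_const_fract zL_eq_fract_X mult.commute)
  then have "to_fract ([:1, qK - 1:] * [:0, 1:] ^ n - (if n = 0 then 1 else 0))
      = (1 + (qL - 1) * zL) * zL ^ n - (if n = 0 then 1 else 0)"
    by (simp only: to_fract_diff to_fract_mult to_fract_power zL_eq_fract_X fract_X_def) simp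
  moreover have "to_fract (smult qK (\<Sum>k\<le>n. smult (of_nat (n choose k) * qK ^ k) (pint (qBC_poly beta k)))
           - pint (qBC_poly beta n))
      = zL * (qL * (\<Sum>k\<le>n. of_nat (n choose k) * qL ^ k * moment beta k) - moment beta n)"
    by (simp add: to_fract_sum pint qL_eq_const_fract sum_distrib_left right_diff_distrib mult_ac)
  ultimately show ?thesis
    using arg_cong[OF pint_qBC_poly_recurrence[OF assms], of to_fract] by simp
qed

section \<open>The moment functional\<close>

locale qBC_moments =
  fixes beta :: "nat \<Rightarrow> Kq"
  assumes qBC: "is_qBC_numbers beta"
begin

definition Phi :: "Lqz poly \<Rightarrow> Lqz" where
  "Phi p = (\<Sum>k\<le>degree p. coeff p k * moment beta k)"

lemma Phi_eq_sum:
  assumes "degree p \<le> N"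
  shows "Phi p = (\<Sum>k\<le>N. coeff p k * moment beta k)"
  unfolding Phi_def by (rule sum.mono_neutral_left) (use assms in \<open>auto simp: coeff_eq_0\<close>)

lemma Phi_add: "Phi (p + r) = Phi p + Phi r"
proof -
  let ?N = "max (degree p) (degree r)"
  have "degree (p + r) \<le> ?N" by (rule degree_add_le) auto
  then show ?thesis
    by (simp add: Phi_eq_sum[of _ ?N] Phi_eq_sum[of p ?N] Phi_eq_sum[of r ?N] sum.distrib distrib_right)
qed

lemma Phi_0 [simp]: "Phi 0 = 0"
  by (simp add: Phi_def)

lemma Phi_smult: "Phi (smult c p) = c * Phi p"
  by (cases "c = 0") (simp_all add: Phi_def sum_distrib_left mult.assoc)

lemma Phi_minus: "Phi (- p) = - Phi p"
  by (simp add: Phi_def sum_negf)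

lemma Phi_diff: "Phi (p - r) = Phi p - Phi r"
  using Phi_add[of p "- r"] by (simp add: Phi_minus)

lemma Phi_sum: "Phi (\<Sum>x\<in>A. f x) = (\<Sum>x\<in>A. Phi (f x))"
  by (induction A rule: infinite_finite_induct) (simp_all add: Phi_add)

lemma Phi_monom: "Phi (monom c k) = c * moment beta k"
proof -
  have "Phi (monom c k) = (\<Sum>i\<le>k. coeff (monom c k) i * moment beta i)"
    by (rule Phi_eq_sum) (simp add: degree_monom_le)
  also have "\<dots> = (\<Sum>i\<le>k. if i = k then c * moment beta k else 0)"
    by (intro sum.cong refl) (auto simp: coeff_monom)
  finally show ?thesis by simp
qed

lemma Phi_mult_const: "Phi (p * [:c:]) = c * Phi p"
  by (simp add: Phi_smult)

lemma moment_0: "moment beta 0 = 1"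
proof -
  have "zL * (qL * moment beta 0 - moment beta 0) = (1 + (qL - 1) * zL) - 1"
    using moment_recurrence[OF qBC, of 0] by simp
  then have "(qL - 1) * (zL * moment beta 0) = (qL - 1) * zL" by (simp add: algebra_simps)
  then show ?thesis by simp
qed

lemma Phi_1 [simp]: "Phi 1 = 1"
  using Phi_monom[of 1 0] moment_0 by (simp add: monom_0 one_pCons)

lemma Phi_qshift_monom:
  "zL * Phi (smult qL (pcompose (monom 1 n) qshift) - monom 1 n)
     = poly qweight zL * zL ^ n - (if n = 0 then 1 else 0)"
proof -
  have "Phi (pcompose (monom 1 n) qshift) = (\<Sum>k\<le>n. of_nat (n choose k) * qL ^ k * moment beta k)"
    by (simp add: pcompose_monom qshift_def linear_poly_power Phi_sum Phi_monom)
  then show ?thesis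
    using moment_recurrence[OF qBC, of n] by (simp add: Phi_diff Phi_smult Phi_monom)
qed

lemma Phi_qshift:
  "zL * Phi (smult qL (pcompose p qshift) - p) = poly qweight zL * poly p zL - poly p 0"
proof -
  define D where "D r = smult qL (pcompose r qshift) - r" for r
  have D_sum: "D (\<Sum>i\<in>A. f i) = (\<Sum>i\<in>A. D (f i))" for A and f :: "nat \<Rightarrow> Lqz poly"
    by (simp add: D_def pcompose_sum smult_sum_right sum_subtractf)
  have D_smult: "D (smult c r) = smult c (D r)" for c r
    by (simp add: D_def pcompose_smult smult_diff_right mult.commute)
  have p: "p = (\<Sum>i\<le>degree p. smult (coeff p i) (monom 1 i))"
    by (simp add: smult_monom poly_as_sum_of_monoms)
  have "D p = (\<Sum>i\<le>degree p. smult (coeff p i) (D (monom 1 i)))"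
    by (subst p) (simp only: D_sum D_smult)
  then have "zL * Phi (D p) = (\<Sum>i\<le>degree p. coeff p i * (zL * Phi (D (monom 1 i))))"
    by (simp add: Phi_sum Phi_smult sum_distrib_left mult_ac)
  also have "\<dots> = poly qweight zL * (\<Sum>i\<le>degree p. coeff p i * zL ^ i) - coeff p 0"
    by (simp add: D_def Phi_qshift_monom right_diff_distrib sum_subtractf sum_distrib_left mult_ac
        if_distrib[of "\<lambda>x. _ * x"] cong: if_cong)
  also have "\<dots> = poly qweight zL * poly p zL - poly p 0"
    by (simp add: poly_altdef poly_0_coeff_0)
  finally show ?thesis by (simp add: D_def)
qed

text \<open>A \<open>q\<close>-analogue of \<open>z \<integral>\<^sub>0\<^sup>z h' = h(z) - h(0)\<close>.\<close>
lemma Phi_qdiff: "zL * Phi (qdiff h) = poly h zL - poly h 0"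
proof -
  obtain c where c: "h mod qweight = [:c:]"
    using degree_mod_less[of qweight h] by (auto elim: degree_eq_zeroE)
  have h: "h = qweight * (h div qweight) + [:c:]"
    using c by (metis div_mult_mod_eq mult.commute)
  have "zL * Phi (qdiff h) = zL * Phi (smult qL (pcompose (h div qweight) qshift) - h div qweight)"
    by (subst h) (simp add: qdiff_add qdiff_qweight_mult)
  also have "\<dots> = poly h zL - poly h 0"
    unfolding Phi_qshift by (subst (3 4) h) (simp add: algebra_simps)
  finally show ?thesis .
qed

lemma Phi_qdiff_eq_0: "poly h 0 = 0 \<Longrightarrow> poly h zL = 0 \<Longrightarrow> Phi (qdiff h) = 0"
  using Phi_qdiff[of h] by simp

lemma Phi_mult_qdiff_iter:
  assumes "\<And>i. i < j \<Longrightarrow> poly ((qdiff ^^ i) G) 0 = 0 \<and> poly ((qdiff ^^ i) G) zL = 0"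
  shows "Phi (f * (qdiff ^^ j) G) = (- 1) ^ j * Phi (G * (qdiff_adj ^^ j) f)"
  using assms
proof (induction j arbitrary: f)
  case (Suc j)
  let ?G = "(qdiff ^^ j) G" and ?f = "pcompose f qshift_inv"
  have "Phi (pcompose ?f qshift * qdiff ?G) = - Phi (?G * qdiff ?f)"
    using Phi_qdiff_eq_0[of "?f * ?G"] Suc.prems[of j] by (simp add: qdiff_mult Phi_add eq_neg_iff_add_eq_0)
  then have "Phi (f * (qdiff ^^ Suc j) G) = - Phi (?G * qdiff_adj f)"
    by (simp add: qdiff_adj_def)
  also have "\<dots> = - ((- 1) ^ j * Phi (G * (qdiff_adj ^^ j) (qdiff_adj f)))"
    using Suc by (simp add: mult.commute)
  finally show ?case by (simp add: funpow_Suc_right del: funpow.simps)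
qed (simp add: mult.commute)

end

section \<open>Orthogonal polynomials\<close>

text \<open>Rodrigues-type formulas for the orthogonal polynomials \<open>P\<^sub>n\<close> and \<open>y K\<^sub>n\<close>.\<close>
definition rodP :: "nat \<Rightarrow> Lqz poly" where
  "rodP n = (qdiff ^^ n) (node_poly 0 n * node_poly zL n)"

definition rodQ :: "nat \<Rightarrow> Lqz poly" where
  "rodQ n = (qdiff ^^ n) (node_poly 0 (Suc n) * node_poly zL n)"

definition rodK :: "nat \<Rightarrow> Lqz poly" where
  "rodK n = rodQ n div [:0, 1:]"

lemma poly_qdiff_iter_node_poly_mult:
  shows "i < a \<Longrightarrow> poly ((qdiff ^^ i) (node_poly 0 a * node_poly zL b)) 0 = 0"
    and "i < b \<Longrightarrow> poly ((qdiff ^^ i) (node_poly 0 a * node_poly zL b)) zL = 0"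
  using poly_qdiff_iter_eq_0[of 0 a "node_poly 0 a * node_poly zL b" 0 i]
    poly_qdiff_iter_eq_0[OF poly_qweight_zL_nonzero, of b "node_poly 0 a * node_poly zL b" 0 i]
  by (simp_all add: poly_node_poly_eq_0)

lemma rodQ_eq_X_mult_rodK: "rodQ n = [:0, 1:] * rodK n"
proof -
  have "poly (rodQ n) 0 = 0"
    using poly_qdiff_iter_node_poly_mult(1)[of n "Suc n" n] by (simp add: rodQ_def)
  then have "[:0, 1:] dvd rodQ n" using dvd_iff_poly_eq_0[of 0 "rodQ n"] by simp
  then show ?thesis unfolding rodK_def by (rule dvd_mult_div_cancel[symmetric])
qed

lemma degree_rodP [simp]: "degree (rodP n) = n"
  and coeff_rodP_degree: "coeff (rodP n) n = qfalling (2 * n) n"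
proof -
  let ?G = "node_poly 0 n * node_poly zL n"
  have "degree ?G = 2 * n" by (simp add: degree_mult_eq)
  moreover have "lead_coeff ?G = 1" by (simp add: lead_coeff_mult)
  moreover from calculation show d: "degree (rodP n) = n"
    using degree_qdiff_iter[of n ?G] by (simp add: rodP_def)
  ultimately show "coeff (rodP n) n = qfalling (2 * n) n"
    using d lead_coeff_qdiff_iter[of n ?G] by (simp add: rodP_def)
qed

lemma degree_rodQ [simp]: "degree (rodQ n) = Suc n"
  and coeff_rodQ_degree: "coeff (rodQ n) (Suc n) = qfalling (2 * n + 1) n"
proof -
  let ?G = "node_poly 0 (Suc n) * node_poly zL n"
  have "degree ?G = 2 * n + 1" by (simp add: degree_mult_eq)
  moreover have "lead_coeff ?G = 1" by (simp add: lead_coeff_mult)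
  moreover from calculation show d: "degree (rodQ n) = Suc n"
    using degree_qdiff_iter[of n ?G] by (simp add: rodQ_def)
  ultimately show "coeff (rodQ n) (Suc n) = qfalling (2 * n + 1) n"
    using d lead_coeff_qdiff_iter[of n ?G] by (simp add: rodQ_def)
qed

lemma degree_rodK [simp]: "degree (rodK n) = n"
  and coeff_rodK_degree: "coeff (rodK n) n = qfalling (2 * n + 1) n"
proof -
  have "rodK n \<noteq> 0" using degree_rodQ[of n] rodQ_eq_X_mult_rodK[of n] by auto
  then have "degree (rodQ n) = Suc (degree (rodK n))" "lead_coeff (rodQ n) = lead_coeff (rodK n)"
    unfolding rodQ_eq_X_mult_rodK by (simp_all add: degree_mult_eq lead_coeff_mult)
  then show "degree (rodK n) = n" "coeff (rodK n) n = qfalling (2 * n + 1) n"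
    using coeff_rodQ_degree[of n] by simp_all
qed

context qBC_moments
begin

definition node_moment :: "nat \<Rightarrow> nat \<Rightarrow> Lqz" where
  "node_moment a b = Phi (node_poly 0 a * node_poly zL b)"

lemma Phi_mult_rodP_eq_0: "degree f < n \<Longrightarrow> Phi (f * rodP n) = 0"
  unfolding rodP_def
  using Phi_mult_qdiff_iter[of n "node_poly 0 n * node_poly zL n" f]
    poly_qdiff_iter_node_poly_mult qdiff_adj_iter_eq_0 by simp

lemma Phi_mult_rodQ_eq_0: "degree f < n \<Longrightarrow> Phi (f * rodQ n) = 0"
  unfolding rodQ_def
  using Phi_mult_qdiff_iter[of n "node_poly 0 (Suc n) * node_poly zL n" f]
    poly_qdiff_iter_node_poly_mult qdiff_adj_iter_eq_0 by simp

lemma Phi_monom_mult_rodP: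
  "Phi (monom 1 n * rodP n) = (- 1) ^ n * qdiff_adj_lc n * node_moment n n"
  unfolding rodP_def
  using Phi_mult_qdiff_iter[of n "node_poly 0 n * node_poly zL n" "monom 1 n"]
    poly_qdiff_iter_node_poly_mult
  by (simp add: qdiff_adj_iter_monom Phi_smult node_moment_def)

lemma Phi_monom_mult_rodQ:
  "Phi (monom 1 n * rodQ n) = (- 1) ^ n * qdiff_adj_lc n * node_moment (Suc n) n"
  unfolding rodQ_def
  using Phi_mult_qdiff_iter[of n "node_poly 0 (Suc n) * node_poly zL n" "monom 1 n"]
    poly_qdiff_iter_node_poly_mult
  by (simp add: qdiff_adj_iter_monom Phi_smult node_moment_def)

text \<open>\<open>\<Phi>\<close> annihilates the \<open>q\<close>-difference of the product of two node polynomials, which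
  vanishes at \<open>0\<close> and \<open>z\<close>; the relation comes from splitting the resulting linear factor at \<open>x\<close>.\<close>
lemma node_moment_step:
  "Phi (node_poly 0 a * node_poly zL b * [:- x, 1:]) * qint qL (Suc (Suc (a + b)))
   + node_moment a b * (qL ^ a * qint qL (Suc b) * (1 + qL * x) + qint qL (Suc a) * (x - qnode zL b))
   = 0"
proof -
  let ?N = "node_poly 0 a * node_poly zL b"
  define l0 where "l0 = qL ^ a * qint qL (Suc b) - qint qL (Suc a) * qnode zL b"
  define l1 where "l1 = qL ^ a * qint qL (Suc b) * qL + qint qL (Suc a)"
  have l1: "l1 = qint qL (Suc (Suc (a + b)))"
    using qint_add[of qL "Suc a" "Suc b"] by (simp add: l1_def qint_Suc algebra_simps)
  have "Phi (qdiff (node_poly 0 (Suc a) * node_poly zL (Suc b))) = 0"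
    using poly_node_poly_eq_0[of 0 "Suc a" 0] poly_node_poly_eq_0[of 0 "Suc b" zL]
    by (intro Phi_qdiff_eq_0) simp_all
  moreover have "smult (qL ^ a * qint qL (Suc b)) [:1 - 0, qL:] + smult (qint qL (Suc a)) [:- qnode zL b, 1:]
      = smult l1 [:- x, 1:] + [:l0 + l1 * x:]"
    by (simp add: l0_def l1_def algebra_simps)
  ultimately have "Phi (?N * (smult l1 [:- x, 1:] + [:l0 + l1 * x:])) = 0"
    by (simp only: qdiff_node_poly_mult)
  then have "l1 * Phi (?N * [:- x, 1:]) + (l0 + l1 * x) * Phi ?N = 0"
    by (simp only: distrib_left mult_smult_right Phi_add Phi_smult Phi_mult_const)
  then show ?thesis unfolding node_moment_def l1[symmetric]
    by (simp add: l0_def l1_def algebra_simps)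
qed

lemma node_moment_Suc_left:
  "qint qL (Suc (Suc (a + b))) * node_moment (Suc a) b
     = - (qint qL (Suc a) * qL ^ b * (qint qL (Suc a) - zL)) * node_moment a b"
proof -
  have "qint qL (a + Suc b) = qint qL (b + Suc a)" by (simp add: add.commute)
  then have key: "qL ^ a * qint qL (Suc b) = qint qL b + qL ^ b * qint qL (Suc a) - qint qL a"
    by (simp only: qint_add)
  have "qL ^ a * qint qL (Suc b) * (1 + qL * qnode 0 a) + qint qL (Suc a) * (qnode 0 a - qnode zL b)
      = qint qL (Suc a) * (qL ^ a * qint qL (Suc b) + qint qL a - qint qL b - qL ^ b * zL)"
    by (simp add: qnode_def qint_Suc algebra_simps)
  also have "\<dots> = qint qL (Suc a) * qL ^ b * (qint qL (Suc a) - zL)"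
    unfolding key by (simp add: algebra_simps)
  finally have r: "qL ^ a * qint qL (Suc b) * (1 + qL * qnode 0 a) + qint qL (Suc a) * (qnode 0 a - qnode zL b)
      = qint qL (Suc a) * qL ^ b * (qint qL (Suc a) - zL)" .
  have e: "node_poly 0 a * node_poly zL b * [:- qnode 0 a, 1:] = node_poly 0 (Suc a) * node_poly zL b"
    by (simp add: node_poly_Suc mult_ac del: mult_pCons_right mult_pCons_left)
  show ?thesis
    using node_moment_step[of a b "qnode 0 a"] unfolding e r node_moment_def
    by (simp add: algebra_simps eq_neg_iff_add_eq_0)
qed

lemma node_moment_Suc_right:
  "qint qL (Suc (Suc (a + b))) * node_moment a (Suc b)
     = - (qL ^ a * qint qL (Suc b) * qnode zL (Suc b)) * node_moment a b"
proof -
  have "node_poly 0 a * node_poly zL b * [:- qnode zL b, 1:] = node_poly 0 a * node_poly zL (Suc b)"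
    by (simp add: node_poly_Suc mult_ac del: mult_pCons_right mult_pCons_left)
  then show ?thesis
    using node_moment_step[of a b "qnode zL b"] unfolding node_moment_def
    by (simp add: qnode_Suc algebra_simps eq_neg_iff_add_eq_0)
qed

lemma node_moment_nonzero: "node_moment a b \<noteq> 0"
proof (induction a)
  case 0
  show ?case
  proof (induction b)
    case 0
    then show ?case by (simp add: node_moment_def)
  next
    case (Suc b)
    then show ?case
      using node_moment_Suc_right[of 0 b] qint_nonzero[of "Suc b"] qint_nonzero[of "Suc (Suc b)"]
        qnode_zL_nonzero[of "Suc b"]
      by auto
  qed
next
  case (Suc a)
  then show ?case
    using node_moment_Suc_left[of a b] qint_nonzero[of "Suc a"] qint_nonzero[of "Suc (Suc (a + b))"]
      qint_qL_minus_zL_nonzero[of "Suc a"]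
    by auto
qed

lemma Phi_nondegenerate:
  "(\<And>k. k \<le> degree E \<Longrightarrow> Phi (monom 1 k * E) = 0) \<Longrightarrow> E = 0"
proof (rule orthogonal_family_nondegenerate[where L = Phi and Q = rodP])
  show "rodP d \<noteq> 0" for d
    using coeff_rodP_degree[of d] qfalling_nonzero[of d "2 * d"] by auto
  show "Phi (monom 1 d * rodP d) \<noteq> 0" for d
    using qdiff_adj_lc_nonzero[of d] node_moment_nonzero[of d d] by (simp add: Phi_monom_mult_rodP)
qed (use Phi_mult_rodP_eq_0 in \<open>simp_all add: Phi_add Phi_smult degree_monom_eq\<close>)

lemma Phi_X_nondegenerate:
  "(\<And>k. k \<le> degree E \<Longrightarrow> Phi ([:0, 1:] * (monom 1 k * E)) = 0) \<Longrightarrow> E = 0"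
proof (rule orthogonal_family_nondegenerate[where L = "\<lambda>p. Phi ([:0, 1:] * p)" and Q = rodK])
  have X_rodK: "[:0, 1:] * (monom 1 k * rodK d) = monom 1 k * rodQ d" for k d
    by (simp add: rodQ_eq_X_mult_rodK mult_ac del: mult_pCons_left mult_pCons_right)
  show "rodK d \<noteq> 0" for d
    using coeff_rodK_degree[of d] qfalling_nonzero[of d "2 * d + 1"] by auto
  show "Phi ([:0, 1:] * (monom 1 k * rodK d)) = 0" if "k < d" for d k
    unfolding X_rodK using that by (intro Phi_mult_rodQ_eq_0) (simp add: degree_monom_eq)
  show "Phi ([:0, 1:] * (monom 1 d * rodK d)) \<noteq> 0" for d
    unfolding X_rodK using qdiff_adj_lc_nonzero[of d] node_moment_nonzero[of "Suc d" d]
    by (simp add: Phi_monom_mult_rodQ)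
qed (simp_all only: degree_rodK distrib_left mult_smult_right Phi_add Phi_smult)

end

section \<open>The continued fraction\<close>

lemma cfB_even: "cfB (2 * n) = qint qL (2 * n + 1)"
  by (simp add: cfB_def)

lemma cfB_odd: "cfB (Suc (2 * n)) = (qL ^ Suc n + 1) / qint qL (Suc n)"
  by (simp add: cfB_def)

lemma cfA_odd: "cfA (Suc (2 * n)) = qL ^ n * (qint qL (Suc n) - zL)"
  by (simp add: cfA_def)

lemma cfA_even: "cfA (Suc (Suc (2 * n))) = - qnode zL (Suc n)"
  by (simp add: cfA_def qnode_def algebra_simps)

lemma qL_power_plus_1_nonzero: "qL ^ n + 1 \<noteq> 0"
  using qL_power_ne_minus_1[of n] by (simp add: add_eq_0_iff2)

lemma cfB_nonzero: "cfB j \<noteq> 0"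
proof (cases "even j")
  case True
  then obtain n where "j = 2 * n" by (elim evenE)
  then show ?thesis by (simp add: cfB_even qint_nonzero)
next
  case False
  then obtain n where "j = Suc (2 * n)" by (auto elim: oddE)
  then show ?thesis using qL_power_plus_1_nonzero[of "Suc n"] by (simp add: cfB_odd qint_nonzero)
qed

lemma cfA_nonzero: "cfA (Suc j) \<noteq> 0"
proof (cases "even j")
  case True
  then obtain n where "j = 2 * n" by (elim evenE)
  then show ?thesis using qint_qL_minus_zL_nonzero[of "Suc n"] by (simp add: cfA_odd)
next
  case False
  then obtain n where "j = Suc (2 * n)" by (auto elim: oddE)
  then show ?thesis by (simp add: cfA_even qnode_zL_nonzero)
qed

text \<open>The leading coefficients of the normalised orthogonal polynomials \<open>P\<^sub>0, K\<^sub>0, P\<^sub>1, K\<^sub>1, \<dots>\<close>,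
  chosen so that the top coefficients cancel in the contiguous relations below.\<close>
fun lc_seq :: "nat \<Rightarrow> Lqz" where
  "lc_seq 0 = 1"
| "lc_seq (Suc j) = - cfB j * lc_seq j / cfA (Suc j)"

lemma lc_seq_rec: "cfB j * lc_seq j + cfA (Suc j) * lc_seq (Suc j) = 0"
  using cfA_nonzero[of j] by simp

lemma lc_seq_nonzero: "lc_seq j \<noteq> 0"
  by (induction j) (simp_all add: cfA_nonzero cfB_nonzero)

definition normP :: "nat \<Rightarrow> Lqz poly" where
  "normP n = smult (lc_seq (2 * n) / qfalling (2 * n) n) (rodP n)"

definition normK :: "nat \<Rightarrow> Lqz poly" where
  "normK n = smult (lc_seq (2 * n + 1) / qfalling (2 * n + 1) n) (rodK n)"

lemma degree_normP [simp]: "degree (normP n) = n"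
  using lc_seq_nonzero[of "2 * n"] qfalling_nonzero[of n "2 * n"] by (simp add: normP_def)

lemma coeff_normP_degree: "coeff (normP n) n = lc_seq (2 * n)"
  using qfalling_nonzero[of n "2 * n"] by (simp add: normP_def coeff_rodP_degree)

lemma degree_normK [simp]: "degree (normK n) = n"
  using lc_seq_nonzero[of "2 * n + 1"] qfalling_nonzero[of n "2 * n + 1"]
  by (simp add: normK_def del: lc_seq.simps)

lemma coeff_normK_degree: "coeff (normK n) n = lc_seq (2 * n + 1)"
  using qfalling_nonzero[of n "2 * n + 1"] by (simp add: normK_def coeff_rodK_degree del: lc_seq.simps)

lemma normP_0: "normP 0 = 1"
  by (simp add: normP_def rodP_def qfalling_def)

lemma normK_0: "normK 0 = [:- 1 / cfA 1:]"
proof -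
  have "rodQ 0 = [:0, 1:]" by (simp add: rodQ_def node_poly_def)
  then show ?thesis by (simp add: normK_def rodK_def qfalling_def cfB_def)
qed

context qBC_moments
begin

lemma Phi_monom_mult_normP_eq_0: "k < n \<Longrightarrow> Phi (monom 1 k * normP n) = 0"
  by (simp add: normP_def Phi_smult Phi_mult_rodP_eq_0 degree_monom_eq)

lemma Phi_monom_mult_X_normK_eq_0:
  assumes "k < n"
  shows "Phi (monom 1 (Suc k) * normK n) = 0"
proof -
  have "monom 1 (Suc k) = [:0, 1:] * monom (1::Lqz) k" by (simp add: monom_Suc)
  then have "monom 1 (Suc k) * rodK n = monom 1 k * rodQ n"
    by (simp add: rodQ_eq_X_mult_rodK mult_ac del: mult_pCons_left mult_pCons_right)
  then show ?thesis
    using assms by (simp add: normK_def Phi_smult Phi_mult_rodQ_eq_0 degree_monom_eq del: lc_seq.simps)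
qed

lemma Phi_monom_mult_normP:
  "Phi (monom 1 n * normP n)
     = lc_seq (2 * n) / qfalling (2 * n) n * ((- 1) ^ n * qdiff_adj_lc n * node_moment n n)"
  by (simp add: normP_def Phi_smult Phi_monom_mult_rodP del: lc_seq.simps)

lemma Phi_monom_mult_X_normK:
  "Phi (monom 1 (Suc n) * normK n)
     = lc_seq (2 * n + 1) / qfalling (2 * n + 1) n * ((- 1) ^ n * qdiff_adj_lc n * node_moment (Suc n) n)"
proof -
  have "monom 1 (Suc n) * normK n = smult (lc_seq (2 * n + 1) / qfalling (2 * n + 1) n) (monom 1 n * rodQ n)"
    by (simp add: normK_def rodQ_eq_X_mult_rodK mult_ac flip: X_mult_monom
        del: lc_seq.simps mult_pCons_left mult_pCons_right)
  then show ?thesis by (simp add: Phi_smult Phi_monom_mult_rodQ del: lc_seq.simps)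
qed

lemma Phi_diagonal_P_K:
  "Phi (monom 1 n * normP n) = cfB (Suc (2 * n)) * Phi (monom 1 (Suc n) * normK n)"
proof -
  define F where "F = qfalling (2 * n) n"
  define w where "w = qL ^ Suc n + 1"
  define d where "d = qint qL (Suc n) - zL"
  define c where "c = lc_seq (2 * n) / F"
  define c' where "c' = lc_seq (2 * n + 1) / qfalling (2 * n + 1) n"
  have nz: "qint qL (Suc n) \<noteq> 0" "qint qL (2 * n + 1) \<noteq> 0" "qL ^ n \<noteq> 0" "d \<noteq> 0" "w \<noteq> 0" "F \<noteq> 0"
    using qint_nonzero[of "Suc n"] qint_nonzero[of "2 * n + 1"] qint_qL_minus_zL_nonzero[of "Suc n"]
      qL_power_plus_1_nonzero[of "Suc n"] qfalling_nonzero[of n "2 * n"]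
    by (simp_all add: F_def w_def d_def)
  have F': "qfalling (2 * n + 1) n = qint qL (2 * n + 1) * F / qint qL (Suc n)"
    using qfalling_Suc[of "Suc (2 * n)" n] qfalling_Suc_Suc[of "2 * n" n] nz
    by (simp add: F_def Suc_diff_le field_simps)
  have l': "lc_seq (2 * n + 1) = - qint qL (2 * n + 1) * lc_seq (2 * n) / (qL ^ n * d)"
    by (simp add: cfB_even cfA_odd d_def)
  have c': "c' = - qint qL (Suc n) / (qL ^ n * d) * c"
    unfolding c_def c'_def F' l' using nz by (simp add: field_simps del: lc_seq.simps)
  have "Suc (Suc (n + n)) = 2 * Suc n" by simp
  then have "qint qL (Suc n) * (w * node_moment (Suc n) n) = qint qL (Suc n) * (- (qL ^ n * d) * node_moment n n)"
    using node_moment_Suc_left[of n n] by (simp only: qint_double w_def d_def) (simp add: algebra_simps)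
  then have "w * node_moment (Suc n) n = - (qL ^ n * d) * node_moment n n"
    by (rule mult_left_cancel[OF nz(1), THEN iffD1])
  then have J': "node_moment (Suc n) n = - (qL ^ n * d) / w * node_moment n n"
    using nz(5) by (simp add: field_simps)
  have b: "cfB (Suc (2 * n)) = w / qint qL (Suc n)"
    by (simp add: cfB_odd w_def)
  show ?thesis
    unfolding Phi_monom_mult_normP Phi_monom_mult_X_normK F_def[symmetric] c_def[symmetric]
      c'_def[symmetric] c' J' b
    using nz by (simp add: field_simps)
qed

lemma Phi_diagonal_K_P:
  "Phi (monom 1 (Suc n) * normK n) = cfB (2 * Suc n) * Phi (monom 1 (Suc n) * normP (Suc n))"
proof -
  define F where "F = qfalling (2 * n + 1) n"
  define w where "w = qL ^ Suc n + 1"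
  define c where "c = lc_seq (2 * n + 1) / F"
  define c' where "c' = lc_seq (2 * Suc n) / qfalling (2 * Suc n) (Suc n)"
  have nz: "qint qL (Suc n) \<noteq> 0" "qint qL (2 * Suc n + 1) \<noteq> 0" "qL ^ Suc n \<noteq> 0"
    "qnode zL (Suc n) \<noteq> 0" "w \<noteq> 0" "F \<noteq> 0"
    using qint_nonzero[of "Suc n"] qint_nonzero[of "2 * Suc n + 1"] qnode_zL_nonzero[of "Suc n"]
      qL_power_plus_1_nonzero[of "Suc n"] qfalling_nonzero[of n "2 * n + 1"]
    by (simp_all add: F_def w_def)
  have F': "qfalling (2 * Suc n) (Suc n) = w * qint qL (Suc n) * F"
    using qfalling_Suc_Suc[of "2 * n + 1" n] qint_double[of qL "Suc n"] by (simp add: F_def w_def)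
  have l': "lc_seq (2 * Suc n) = w * lc_seq (2 * n + 1) / (qint qL (Suc n) * qnode zL (Suc n))"
  proof -
    have e: "2 * Suc n = Suc (Suc (2 * n))" by simp
    show ?thesis
      unfolding e lc_seq.simps(2)[of "Suc (2 * n)"] cfB_odd cfA_even w_def[symmetric]
      using nz by (simp add: field_simps del: lc_seq.simps)
  qed
  have c': "c' = c / (qint qL (Suc n) * qint qL (Suc n) * qnode zL (Suc n))"
    unfolding c_def c'_def F' l' using nz by (simp add: field_simps del: lc_seq.simps)
  have e: "Suc (Suc (Suc n + n)) = 2 * Suc n + 1" by simp
  have J': "node_moment (Suc n) (Suc n)
      = - (qL ^ Suc n * qint qL (Suc n) * qnode zL (Suc n)) / qint qL (2 * Suc n + 1) * node_moment (Suc n) n"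
    using node_moment_Suc_right[of "Suc n" n, unfolded e] nz(2) by (simp add: field_simps)
  have k': "qdiff_adj_lc (Suc n) = qint qL (Suc n) / qL ^ Suc n * qdiff_adj_lc n"
    by (simp add: qdiff_adj_lc_def)
  show ?thesis
    unfolding Phi_monom_mult_normP Phi_monom_mult_X_normK F_def[symmetric] c_def[symmetric]
      c'_def[symmetric] c' J' k' cfB_even
    using nz by (simp add: field_simps del: lc_seq.simps)
qed

lemma normP_contiguous:
  "normP n = smult (cfB (Suc (2 * n))) ([:0, 1:] * normK n) + smult (cfA (Suc (Suc (2 * n)))) (normP (Suc n))"
proof -
  define b where "b = cfB (Suc (2 * n))"
  define a where "a = cfA (Suc (Suc (2 * n)))"
  define D where "D = normP n - smult b ([:0, 1:] * normK n) - smult a (normP (Suc n))"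
  have "degree D \<le> Suc n"
    unfolding D_def by (intro degree_diff_le degree_smult_le[THEN order_trans]) (simp_all add: degree_mult_le)
  moreover have "coeff D (Suc n) = - (b * lc_seq (Suc (2 * n)) + a * lc_seq (Suc (Suc (2 * n))))"
    by (simp add: D_def coeff_normK_degree coeff_normP_degree[of "Suc n"] coeff_eq_0 del: lc_seq.simps)
  then have "coeff D (Suc n) = 0"
    using lc_seq_rec[of "Suc (2 * n)"] by (simp add: a_def b_def del: lc_seq.simps)
  ultimately have degree_D: "degree D \<le> n" by (rule degree_le_of_top_coeff_eq_0)
  have "D = 0"
  proof (rule Phi_nondegenerate)
    fix k assume "k \<le> degree D"
    then have k: "k \<le> n" using degree_D by simp
    have "Phi (monom 1 k * D) = Phi (monom 1 k * normP n) - b * Phi (monom 1 (Suc k) * normK n)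
        - a * Phi (monom 1 k * normP (Suc n))"
      by (simp only: D_def right_diff_distrib mult_smult_right monom_mult_X_mult Phi_diff Phi_smult)
    also have "\<dots> = 0"
    proof (cases "k < n")
      case True
      then show ?thesis
        by (simp add: Phi_monom_mult_normP_eq_0 Phi_monom_mult_X_normK_eq_0)
    next
      case False
      then show ?thesis
        using k Phi_diagonal_P_K[of n] by (simp add: b_def Phi_monom_mult_normP_eq_0)
    qed
    finally show "Phi (monom 1 k * D) = 0" .
  qed
  then show ?thesis by (simp add: D_def a_def b_def algebra_simps)
qed

lemma normK_contiguous:
  "normK n = smult (cfB (2 * Suc n)) (normP (Suc n)) + smult (cfA (Suc (2 * Suc n))) (normK (Suc n))"
proof -
  define b where "b = cfB (2 * Suc n)"
  define a where "a = cfA (Suc (2 * Suc n))"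
  define D where "D = normK n - smult b (normP (Suc n)) - smult a (normK (Suc n))"
  have "degree D \<le> Suc n"
    unfolding D_def by (intro degree_diff_le degree_smult_le[THEN order_trans]) simp_all
  moreover have "coeff D (Suc n) = - (b * lc_seq (2 * Suc n) + a * lc_seq (Suc (2 * Suc n)))"
    by (simp add: D_def coeff_normK_degree[of "Suc n"] coeff_normP_degree[of "Suc n"] coeff_eq_0
        del: lc_seq.simps)
  then have "coeff D (Suc n) = 0"
    using lc_seq_rec[of "2 * Suc n"] by (simp add: a_def b_def del: lc_seq.simps)
  ultimately have degree_D: "degree D \<le> n" by (rule degree_le_of_top_coeff_eq_0)
  have "D = 0"
  proof (rule Phi_X_nondegenerate)
    fix k assume "k \<le> degree D"
    then have k: "k \<le> n" using degree_D by simp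
    have "Phi ([:0, 1:] * (monom 1 k * D)) = Phi (monom 1 (Suc k) * normK n)
        - b * Phi (monom 1 (Suc k) * normP (Suc n)) - a * Phi (monom 1 (Suc k) * normK (Suc n))"
      by (simp only: D_def right_diff_distrib mult_smult_right X_mult_monom_mult Phi_diff Phi_smult)
    also have "\<dots> = 0"
    proof (cases "k < n")
      case True
      then show ?thesis
        by (simp add: Phi_monom_mult_normP_eq_0 Phi_monom_mult_X_normK_eq_0)
    next
      case False
      then show ?thesis
        using k Phi_diagonal_K_P[of n] by (simp add: b_def Phi_monom_mult_X_normK_eq_0)
    qed
    finally show "Phi ([:0, 1:] * (monom 1 k * D)) = 0" .
  qed
  then show ?thesis by (simp add: D_def a_def b_def algebra_simps)
qed

definition Pser :: "nat \<Rightarrow> Lqz fps" where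
  "Pser n = Abs_fps (\<lambda>k. Phi (monom 1 (k + n) * normP n))"

definition Kser :: "nat \<Rightarrow> Lqz fps" where
  "Kser n = Abs_fps (\<lambda>k. Phi (monom 1 (k + Suc n) * normK n))"

fun Hser :: "nat \<Rightarrow> Lqz fps" where
  "Hser 0 = 1"
| "Hser (Suc j) = (if even j then Pser (j div 2) else Kser (j div 2))"

lemma Pser_rec:
  "Pser n = fps_const (cfB (Suc (2 * n))) * Kser n + fps_const (cfA (Suc (Suc (2 * n)))) * fps_X * Pser (Suc n)"
proof (rule fps_ext)
  fix k
  have rec: "Phi (monom 1 m * normP n) = cfB (Suc (2 * n)) * Phi (monom 1 (Suc m) * normK n)
      + cfA (Suc (Suc (2 * n))) * Phi (monom 1 m * normP (Suc n))" for m
    by (subst normP_contiguous)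
      (simp only: distrib_left mult_smult_right monom_mult_X_mult Phi_add Phi_smult)
  show "Pser n $ k = (fps_const (cfB (Suc (2 * n))) * Kser n
      + fps_const (cfA (Suc (Suc (2 * n)))) * fps_X * Pser (Suc n)) $ k"
    using rec[of "k + n"] Phi_monom_mult_normP_eq_0[of n "Suc n"]
    by (cases k) (simp_all add: Pser_def Kser_def fps_const_mult_X_mult_nth)
qed

lemma Kser_rec:
  "Kser n = fps_const (cfB (2 * Suc n)) * Pser (Suc n) + fps_const (cfA (Suc (2 * Suc n))) * fps_X * Kser (Suc n)"
proof (rule fps_ext)
  fix k
  have rec: "Phi (monom 1 m * normK n) = cfB (2 * Suc n) * Phi (monom 1 m * normP (Suc n))
      + cfA (Suc (2 * Suc n)) * Phi (monom 1 m * normK (Suc n))" for m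
    by (subst normK_contiguous) (simp only: distrib_left mult_smult_right Phi_add Phi_smult)
  show "Kser n $ k = (fps_const (cfB (2 * Suc n)) * Pser (Suc n)
      + fps_const (cfA (Suc (2 * Suc n))) * fps_X * Kser (Suc n)) $ k"
    using rec[of "k + Suc n"] Phi_monom_mult_X_normK_eq_0[of n "Suc n"]
    by (cases k) (simp_all add: Pser_def Kser_def fps_const_mult_X_mult_nth)
qed

lemma Pser_0_eq_Bhat: "Pser 0 = Bhat beta"
  by (simp add: Pser_def normP_0 Phi_monom Bhat_eq_moment)

lemma Hser_rec:
  "Hser j = fps_const (cfB j) * Hser (Suc j) + fps_const (cfA (Suc j)) * fps_X * Hser (Suc (Suc j))"
proof -
  consider "j = 0" | n where "j = Suc (2 * n)" | n where "j = Suc (Suc (2 * n))"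
  proof -
    have "j = 0 \<or> (\<exists>n. j = Suc (2 * n)) \<or> (\<exists>n. j = Suc (Suc (2 * n)))" by presburger
    then show ?thesis using that by blast
  qed
  then show ?thesis
  proof cases
    case 1
    have "1 = Pser 0 + fps_const (cfA 1) * fps_X * Kser 0"
    proof (rule fps_ext)
      fix k
      show "1 $ k = (Pser 0 + fps_const (cfA 1) * fps_X * Kser 0) $ k"
        using cfA_nonzero[of 0] moment_0
        by (cases k) (simp_all add: Pser_def Kser_def normP_0 normK_0 Phi_monom Phi_smult Phi_minus
            fps_const_mult_X_mult_nth)
    qed
    then show ?thesis using 1 by (simp add: cfB_def)
  next
    case 2
    then show ?thesis using Pser_rec[of n] by simp
  next
    case 3
    then show ?thesis using Kser_rec[of n] by simp
  qed
qed

end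

theorem mainTheorem11:
  fixes beta :: "nat \<Rightarrow> Kq"
  assumes "is_qBC_numbers beta"
  shows "cf_conv cfA cfB \<longlonglongrightarrow> Bhat beta"
proof -
  interpret qBC_moments beta by (rule qBC_moments.intro) (rule assms)
  have "cf_conv cfA cfB \<longlonglongrightarrow> Hser 1 * inverse (Hser 0)"
    by (rule cf_conv_tendsto[where H = Hser and a = cfA and b = cfB, OF Hser_rec cfB_nonzero]) simp
  then show ?thesis by (simp add: Pser_0_eq_Bhat)
qed

end
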